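(* Let $A\subset M$ and $f:M\to\mathbb{R}$ be such that all quantities below are finite. Then \[ 2\inf_{x\in A}\big[f(x)+W(x)\big]-2W(O_1)-h_1\ \ge\ \min_{j\in L}R^{(2)}_j, \] where $R^{(2)}_1=2\inf_{x\in A}[f(x)+V(O_1,x)]-h_1$ and, for $j\in L\setminus\{1\}$, $R^{(2)}_j=2\inf_{x\in A}[f(x)+V(O_j,x)]+W(O_j)-2W(O_1)+W(O_1\cup O_j)$.
   Context: $V:M\times M\to[0,\infty)$ is the Freidlin–Wentzell quasipotential of a small-noise diffusion on a compact manifold $M$: $V(x,y)=\inf\{I_T(\phi):\phi(0)=x,\phi(T)=y,T<\infty\}$ where $I_T(\phi)=\int_0^T\frac12\langle\dot\phi_t-b(\phi_t),[\sigma(\phi_t)\sigma(\phi_t)^T]^{-1}(\dot\phi_t-b(\phi_t))\rangle dt$. $O_1,\dots,O_l$ ($l\ge2$) are the equilibrium points, $L=\{1,\dots,l\}$. Graphs: for $W\subset L$, a $W$-graph on $L$ is a set of arrows $i\to j$ ($i\in L\setminus W$, $j\in L$, $j\ne i$) such that every $i\in L\setminus W$ is the initial point of exactly one arrow and from every $i\in L\setminus W$ a sequence of arrows leads into $W$; $G(W)$ is the set of $W$-graphs, $G(j)=G(\{j\})$, $G(i,j)=G(\{i,j\})$. $W(O_j)=\min_{g\in G(j)}\sum_{(m\to n)\in g}V(O_m,O_n)$, $W(O_1\cup O_j)=\min_{g\in G(1,j)}\sum_{(m\to n)\in g}V(O_m,O_n)$ for $j\ne1$, $W(x)=\min_{j\in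 L}[W(O_j)+V(O_j,x)]$, and $h_1=\min_{\ell\in L\setminus\{1\}}V(O_1,O_\ell)$. *)

theory Defs
  imports Complex_Main
begin

text \<open>Abstract setting: points of M have type 'a, the quasipotential is
  V :: 'a => 'a => real, the equilibria are Eq 1, ..., Eq l, L = {1..l}.\<close>

definition Wgraphs :: "nat set \<Rightarrow> nat set \<Rightarrow> (nat \<times> nat) set set" where
  "Wgraphs L W = {g. g \<subseteq> (L - W) \<times> L
      \<and> (\<forall>(i,j)\<in>g. i \<noteq> j)
      \<and> (\<forall>i\<in>L - W. \<exists>!j. (i,j) \<in> g)
      \<and> (\<forall>i\<in>L - W. \<exists>w\<in>W. (i,w) \<in> g\<^sup>+)}"

definition gcost :: "('a \<Rightarrow> 'a \<Rightarrow> real) \<Rightarrow> (nat \<Rightarrow> 'a) \<Rightarrow> (nat \<times> nat) set \<Rightarrow> real" where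
  "gcost V Eq g = (\<Sum>(m,n)\<in>g. V (Eq m) (Eq n))"

definition Wset :: "('a \<Rightarrow> 'a \<Rightarrow> real) \<Rightarrow> (nat \<Rightarrow> 'a) \<Rightarrow> nat set \<Rightarrow> nat set \<Rightarrow> real" where
  "Wset V Eq L W = Min (gcost V Eq ` Wgraphs L W)"

definition Wpt :: "('a \<Rightarrow> 'a \<Rightarrow> real) \<Rightarrow> (nat \<Rightarrow> 'a) \<Rightarrow> nat set \<Rightarrow> 'a \<Rightarrow> real" where
  "Wpt V Eq L x = Min ((\<lambda>j. Wset V Eq L {j} + V (Eq j) x) ` L)"

definition h1 :: "('a \<Rightarrow> 'a \<Rightarrow> real) \<Rightarrow> (nat \<Rightarrow> 'a) \<Rightarrow> nat set \<Rightarrow> real" where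
  "h1 V Eq L = Min ((\<lambda>k. V (Eq 1) (Eq k)) ` (L - {1}))"

end

theory Submission
  imports Defs
begin

text \<open>Take $j$ attaining the minimum in $W(x)$. For $j = 1$ the bound is the term
  $R^{(2)}_1$ itself. For $j \neq 1$, deleting the arrow leaving $1$ from an optimal
  $\{j\}$-graph gives a $\{1,j\}$-graph, and the deleted arrow costs at least $h_1$;
  hence $W(O_1 \cup O_j) \le W(O_j) - h_1$, which turns $R^{(2)}_j$ into a lower bound
  for $2(f(x) + W(x)) - 2W(O_1) - h_1$. Taking the infimum over $x \in A$ concludes.\<close>

lemma finite_Wgraphs: "finite L \<Longrightarrow> finite (Wgraphs L W)"
  by (rule finite_subset[of _ "Pow (L \<times> L)"]) (auto simp: Wgraphs_def)

lemma star_in_Wgraphs: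
  assumes "w \<in> W" "w \<in> L"
  shows "{(i, w) | i. i \<in> L - W} \<in> Wgraphs L W"
  using assms unfolding Wgraphs_def by auto

lemma Wset_le_gcost:
  "finite L \<Longrightarrow> g \<in> Wgraphs L W \<Longrightarrow> Wset V Eq L W \<le> gcost V Eq g"
  unfolding Wset_def by (simp add: finite_Wgraphs)

lemma Wset_attained:
  assumes "finite L" "w \<in> W" "w \<in> L"
  obtains g where "g \<in> Wgraphs L W" "gcost V Eq g = Wset V Eq L W"
proof -
  have "Wset V Eq L W \<in> gcost V Eq ` Wgraphs L W"
    unfolding Wset_def using assms star_in_Wgraphs
    by (intro Min_in) (auto simp: finite_Wgraphs)
  then obtain g where "g \<in> Wgraphs L W" "Wset V Eq L W = gcost V Eq g" by blast
  then show ?thesis using that by simp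
qed

lemma trancl_Diff_arrow_reaches:
  assumes "(i, w) \<in> g\<^sup>+" "i \<noteq> a"
  shows "(i, w) \<in> (g - {(a, k)})\<^sup>+ \<or> (i, a) \<in> (g - {(a, k)})\<^sup>+"
  using assms
proof (induction rule: converse_trancl_induct)
  case (base y)
  then show ?case by auto
next
  case (step y z)
  then have yz: "(y, z) \<in> g - {(a, k)}" by auto
  show ?case
  proof (cases "z = a")
    case True
    then show ?thesis using yz by auto
  next
    case False
    then show ?thesis using step yz by (meson trancl_into_trancl2)
  qed
qed

lemma Diff_arrow_in_Wgraphs:
  assumes g: "g \<in> Wgraphs L W" and ak: "(a, k) \<in> g"
  shows "g - {(a, k)} \<in> Wgraphs L (insert a W)"
proof -
  have g_props: "g \<subseteq> (L - W) \<times> L" "\<forall>(i, j)\<in>g. i \<noteq> j"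
    "\<forall>i\<in>L - W. \<exists>!j. (i, j) \<in> g" "\<forall>i\<in>L - W. \<exists>w\<in>W. (i, w) \<in> g\<^sup>+"
    using g unfolding Wgraphs_def by auto
  show ?thesis
    unfolding Wgraphs_def
  proof (intro CollectI conjI ballI)
    show "g - {(a, k)} \<subseteq> (L - insert a W) \<times> L"
      using g_props(1,3) ak by fastforce
    show "\<exists>w\<in>insert a W. (i, w) \<in> (g - {(a, k)})\<^sup>+" if "i \<in> L - insert a W" for i
      using that g_props(4) trancl_Diff_arrow_reaches[of i _ g a k] by blast
  qed (use g_props(2,3) in auto)
qed

lemma Wset_insert_le:
  assumes fin: "finite L" and a: "a \<in> L - W" and w: "w \<in> W" "w \<in> L"
  obtains k where "k \<in> L - {a}"
    and "Wset V Eq L (insert a W) + V (Eq a) (Eq k) \<le> Wset V Eq L W"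
proof -
  obtain g where g: "g \<in> Wgraphs L W" and opt: "gcost V Eq g = Wset V Eq L W"
    using Wset_attained[OF fin w] .
  have "\<exists>!k. (a, k) \<in> g"
    using g a unfolding Wgraphs_def by simp
  then obtain k where ak: "(a, k) \<in> g" by blast
  have k: "k \<in> L - {a}"
    using g ak unfolding Wgraphs_def by auto
  have "finite g"
    using g fin unfolding Wgraphs_def by (auto intro: finite_subset[of _ "L \<times> L"])
  then have "gcost V Eq g = gcost V Eq (g - {(a, k)}) + V (Eq a) (Eq k)"
    unfolding gcost_def using ak by (simp add: sum.remove add.commute)
  moreover have "Wset V Eq L (insert a W) \<le> gcost V Eq (g - {(a, k)})"
    by (rule Wset_le_gcost[OF fin Diff_arrow_in_Wgraphs[OF g ak]])
  ultimately show ?thesis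
    using opt by (intro that[OF k]) linarith
qed

lemma Wset_pair_le:
  assumes "finite L" "1 \<in> L" "j \<in> L" "j \<noteq> 1"
  shows "Wset V Eq L {1, j} \<le> Wset V Eq L {j} - h1 V Eq L"
proof -
  obtain k where k: "k \<in> L - {1}"
    and le: "Wset V Eq L (insert 1 {j}) + V (Eq 1) (Eq k) \<le> Wset V Eq L {j}"
    using Wset_insert_le[of L 1 "{j}" j] assms by auto
  have "h1 V Eq L \<le> V (Eq 1) (Eq k)"
    unfolding h1_def using assms(1) k by auto
  then show ?thesis using le by simp
qed

lemma Wpt_attained:
  assumes "finite L" "L \<noteq> {}"
  obtains j where "j \<in> L" "Wpt V Eq L x = Wset V Eq L {j} + V (Eq j) x"
proof -
  have "Wpt V Eq L x \<in> (\<lambda>j. Wset V Eq L {j} + V (Eq j) x) ` L"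
    unfolding Wpt_def using assms by (intro Min_in) auto
  then show ?thesis using that by auto
qed

theorem lemma8p3:
  fixes V :: "'a \<Rightarrow> 'a \<Rightarrow> real" and Eq :: "nat \<Rightarrow> 'a" and l :: nat
    and A :: "'a set" and f :: "'a \<Rightarrow> real"
  assumes l2: "l \<ge> 2"
    and Vnonneg: "\<And>x y. V x y \<ge> 0"
    and Oinj: "inj_on Eq {1..l}"
    and Ane: "A \<noteq> {}"
    and bdd_W: "bdd_below ((\<lambda>x. f x + Wpt V Eq {1..l} x) ` A)"
    and bdd_V: "\<And>j. j \<in> {1..l} \<Longrightarrow> bdd_below ((\<lambda>x. f x + V (Eq j) x) ` A)"
  shows "2 * (INF x\<in>A. f x + Wpt V Eq {1..l} x) - 2 * Wset V Eq {1..l} {1} - h1 V Eq {1..l}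
     \<ge> Min ((\<lambda>j. if j = 1
                 then 2 * (INF x\<in>A. f x + V (Eq 1) x) - h1 V Eq {1..l}
                 else 2 * (INF x\<in>A. f x + V (Eq j) x) + Wset V Eq {1..l} {j}
                      - 2 * Wset V Eq {1..l} {1} + Wset V Eq {1..l} {1, j}) ` {1..l})"
    (is "_ \<ge> Min (?R ` ?L)")
proof -
  let ?c = "2 * Wset V Eq ?L {1} + h1 V Eq ?L"
  have "(Min (?R ` ?L) + ?c) / 2 \<le> f x + Wpt V Eq ?L x" if x: "x \<in> A" for x
  proof -
    have "finite ?L" "?L \<noteq> {}" using l2 by auto
    then obtain j where j: "j \<in> ?L" and Wx: "Wpt V Eq ?L x = Wset V Eq ?L {j} + V (Eq j) x"
      by (rule Wpt_attained)
    have "Min (?R ` ?L) \<le> ?R j" using j by simp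
    moreover have "(INF y\<in>A. f y + V (Eq j) y) \<le> f x + V (Eq j) x"
      using cINF_lower[OF bdd_V[OF j] x] .
    moreover have "j \<noteq> 1 \<Longrightarrow> Wset V Eq ?L {1, j} \<le> Wset V Eq ?L {j} - h1 V Eq ?L"
      using Wset_pair_le[of ?L j] j l2 by auto
    ultimately show ?thesis using Wx by (cases "j = 1") simp_all
  qed
  then have "(Min (?R ` ?L) + ?c) / 2 \<le> (INF x\<in>A. f x + Wpt V Eq ?L x)"
    using Ane by (intro cINF_greatest) auto
  then show ?thesis by simp
qed

end
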